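(* Consider the network model, interest-based mobility model and FirstMeeting (FM) routing described in the context. Let $T_2$ be the random variable equal to $0$ if the first node met by $S$ among $\{D,R_1,\dots,R_n\}$ is $D$, and otherwise, if this first node is the relay $R_j$ met at time $T_1$, equal to the time elapsed from $T_1$ until the first of $S$ and $R_j$ meets $D$. Then there exist constants $c,c'>0$ such that for all sufficiently large $n$, $$\mathbb{E}[T_2]\ge\min\Big\{c\log(1/\delta(n)),\ \frac{c'n}{\log n}\Big\}.$$
   Context: Network: fix an integer $m\ge 2$ independent of $n$. There are $n+2$ nodes: a source $S$, a destination $D$ and relays $R_1,\dots,R_n$. Each node $X$ has an interest profile, a unit vector in the closed positive orthant of the unit sphere of $\mathbb{R}^m$; $\cos\angle(X,Y)=\langle X,Y\rangle$. $S=(1,0,\dots,0)$, $D=(0,1,0,\dots,0)$. Relay profiles are i.i.d.: $\angle(S,R_i)$ is uniform on $[0,\pi/2]$, and given this angle $R_i$ is uniform among unit vectors of the positive orthant making that angle with $S$. Profiles are fixed in time. Conditional on the profiles, for each unordered pair $\{A,B\}$ the meeting instants form a Poisson process of rate $\lambda_{AB}$, independently over pairs, from time $0$. Interest-based mobility: $\lambda_{AB}=k\cos\angle(A,B)+\delta$, with $\lambda>0$ fixed, $\delta=\delta(n)>0$, $\delta(n)\to0$, $k=\frac{\pi}{2}(\lambda-\delta)$. FM routing: $S$ holds two copies and always keeps one; the second copy goes to the first relay met by $S$ if it is met before $D$, after which no more copies are created or transferred and the message is delivered when the first of $S$ and that relay meets $D$. Expectations are over the profiles and the meeting processes. *)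

theory Defs
  imports "HOL-Probability.Probability"
begin

text \<open>Profiles are vectors in R^m represented as extensional functions on {..<m}.\<close>

definition inner_m :: "nat \<Rightarrow> (nat \<Rightarrow> real) \<Rightarrow> (nat \<Rightarrow> real) \<Rightarrow> real" where
  "inner_m m x y = (\<Sum>i<m. x i * y i)"

definition unit_vec :: "nat \<Rightarrow> nat \<Rightarrow> (nat \<Rightarrow> real)" where
  "unit_vec m i = restrict (\<lambda>j. if j = i then 1 else 0) {..<m}"

text \<open>Uniform (normalized surface) measure on the positive orthant of the unit sphere
  of R^d, defined as the cone measure: normalized Lebesgue measure on the positive orthant
  of the unit ball pushed forward radially onto the sphere.\<close>
definition orthant_sphere :: "nat \<Rightarrow> (nat \<Rightarrow> real) measure" where
  "orthant_sphere d =
     distr (uniform_measure (PiM {..<d} (\<lambda>_. lborel))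
              {x \<in> space (PiM {..<d} (\<lambda>_. lborel)). (\<forall>i<d. 0 \<le> x i) \<and> (\<Sum>i<d. (x i)^2) \<le> 1})
           (PiM {..<d} (\<lambda>_. lborel))
           (\<lambda>x. restrict (\<lambda>i. x i / sqrt (\<Sum>j<d. (x j)^2)) {..<d})"

text \<open>Relay profile law: angle theta with S uniform on [0,pi/2]; given theta, the profile is
  (cos theta, sin theta * u) with u uniform on the positive orthant of the unit sphere of R^(m-1).\<close>
definition relay_dist :: "nat \<Rightarrow> (nat \<Rightarrow> real) measure" where
  "relay_dist m =
     distr (uniform_measure lborel {0..pi/2} \<Otimes>\<^sub>M orthant_sphere (m - 1))
           (PiM {..<m} (\<lambda>_. lborel))
           (\<lambda>(\<theta>, u). restrict (\<lambda>i. if i = 0 then cos \<theta> else sin \<theta> * u (i - 1)) {..<m})"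

definition exp1 :: "real measure" where
  "exp1 = density lborel (exponential_density 1)"

text \<open>Sample space: relay profiles (i.i.d.) and, for every pair (a,b) with a<b and every
  q, an Exp(1) variable; the q-th meeting of pair {a,b} happens at
  (sum of the first q+1 of these)/rate, i.e. a Poisson process of that rate.
  Nodes: 0 = S, 1 = D, j+2 = R_(j+1) for j < n.\<close>
definition fm_space :: "nat \<Rightarrow> nat \<Rightarrow> ((nat \<Rightarrow> (nat \<Rightarrow> real)) \<times> (nat \<times> nat \<times> nat \<Rightarrow> real)) measure" where
  "fm_space m n = PiM {..<n} (\<lambda>_. relay_dist m) \<Otimes>\<^sub>M PiM UNIV (\<lambda>_. exp1)"

definition node_profile :: "nat \<Rightarrow> (nat \<Rightarrow> (nat \<Rightarrow> real)) \<Rightarrow> nat \<Rightarrow> (nat \<Rightarrow> real)" where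
  "node_profile m \<rho> x = (if x = 0 then unit_vec m 0 else if x = 1 then unit_vec m 1 else \<rho> (x - 2))"

text \<open>Interest-based rate: k cos(angle) + delta with k = pi/2 (lambda - delta).\<close>
definition meet_rate :: "nat \<Rightarrow> real \<Rightarrow> real \<Rightarrow> (nat \<Rightarrow> (nat \<Rightarrow> real)) \<Rightarrow> nat \<Rightarrow> nat \<Rightarrow> real" where
  "meet_rate m lam del \<rho> a b =
     pi / 2 * (lam - del) * inner_m m (node_profile m \<rho> a) (node_profile m \<rho> b) + del"

definition meet_time :: "nat \<Rightarrow> real \<Rightarrow> real \<Rightarrow> (nat \<Rightarrow> (nat \<Rightarrow> real)) \<Rightarrow> (nat \<times> nat \<times> nat \<Rightarrow> real)
    \<Rightarrow> nat \<Rightarrow> nat \<Rightarrow> nat \<Rightarrow> real" where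
  "meet_time m lam del \<rho> \<omega> a b q =
     (\<Sum>l\<le>q. \<omega> (min a b, max a b, l)) / meet_rate m lam del \<rho> a b"

definition next_meet :: "nat \<Rightarrow> real \<Rightarrow> real \<Rightarrow> (nat \<Rightarrow> (nat \<Rightarrow> real)) \<Rightarrow> (nat \<times> nat \<times> nat \<Rightarrow> real)
    \<Rightarrow> nat \<Rightarrow> nat \<Rightarrow> real \<Rightarrow> real" where
  "next_meet m lam del \<rho> \<omega> a b t = Inf {s. \<exists>q. s = meet_time m lam del \<rho> \<omega> a b q \<and> t < s}"

definition fm_T2 :: "nat \<Rightarrow> real \<Rightarrow> real \<Rightarrow> nat
    \<Rightarrow> (nat \<Rightarrow> (nat \<Rightarrow> real)) \<times> (nat \<times> nat \<times> nat \<Rightarrow> real) \<Rightarrow> real" where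
  "fm_T2 m lam del n = (\<lambda>(\<rho>, \<omega>).
     (let j = (ARG_MIN (\<lambda>x. meet_time m lam del \<rho> \<omega> 0 x 0) x. x \<in> {1..<n+2})
      in if j = 1 then 0
         else (let t1 = meet_time m lam del \<rho> \<omega> 0 j 0
               in min (next_meet m lam del \<rho> \<omega> 0 1 t1) (next_meet m lam del \<rho> \<omega> j 1 t1) - t1)))"

end

(* Put Lambda = pi lam / 2, an upper bound for all meeting rates of S, and alpha = 1 / (n Lambda).
   For s >= 0 and a relay R consider the event that S meets R, but no other relay, before time
   alpha, while neither S nor R meets D before alpha + s. On this event T_2 >= s, and for fixed s
   the events of different relays are disjoint. Given the profiles, the event has probability
     (1 - e^(-alpha r(S,R))) e^(-(alpha + s) r(R,D)) e^(-(alpha + s) delta)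
       * prod_(R' ~= R) e^(-alpha r(S,R')),
   where the product is at least 1/e by the choice of alpha. A relay at angle at most 1/(1+s)
   from S, which occurs with probability 2/(pi (1+s)), has r(S,R) >= Lambda/4 and, as long as
   s delta <= 1, (alpha + s) r(R,D) <= Lambda + 2. So the event has probability at least
   c / (n (1+s)), and summing over the n relays and s = 1, ..., floor(1/delta) gives
   E[T_2] >= (c/2) ln(1/delta) for every n >= 1 once delta <= lam/2. *)

theory Submission
  imports Defs
begin

lemma arg_min_eqI:
  fixes f :: "'a \<Rightarrow> 'b::order"
  assumes "P k" and "\<And>x. P x \<Longrightarrow> x \<noteq> k \<Longrightarrow> f k < f x"
  shows "arg_min f P = k"
  by (rule arg_minI[of P k]) (metis assms order.asym)+

lemma prod_lessThan_if_remove: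
  fixes f g :: "nat \<Rightarrow> 'a::comm_monoid_mult"
  assumes "i < n"
  shows "(\<Prod>j<n. if j = i then g j else f j) = g i * (\<Prod>j\<in>{..<n} - {i}. f j)"
proof -
  have "(\<Prod>j\<in>{..<n} - {i}. if j = i then g j else f j) = (\<Prod>j\<in>{..<n} - {i}. f j)"
    by (rule prod.cong) auto
  with assms show ?thesis by (simp add: prod.remove[of "{..<n}" i])
qed

lemma one_minus_exp_neg_ge_half:
  fixes x :: real
  assumes "0 \<le> x" "x \<le> 1"
  shows "x / 2 \<le> 1 - exp (- x)"
proof -
  have "exp (- x) = 1 / exp x" by (simp add: exp_minus field_simps)
  also have "\<dots> \<le> 1 / (1 + x)"
    using assms by (intro divide_left_mono) (auto simp: exp_ge_add_one_self)
  also have "\<dots> \<le> 1 - x / 2"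
    using assms by (simp add: field_simps mult_left_le)
  finally show ?thesis by simp
qed

lemma nn_integral_of_bool_eq_emeasure:
  assumes "{x \<in> space M. P x} = A" "A \<in> sets M"
  shows "(\<integral>\<^sup>+x. of_bool (P x) \<partial>M) = emeasure M A"
proof -
  have "(\<integral>\<^sup>+x. of_bool (P x) \<partial>M) = (\<integral>\<^sup>+x. indicator A x \<partial>M)"
    using assms(1) by (intro nn_integral_cong) (auto simp: indicator_def)
  then show ?thesis using nn_integral_indicator[OF assms(2)] by simp
qed

lemma sum_of_bool_le_threshold: "(\<Sum>l\<in>{1..L}. of_bool (real l \<le> T) :: ennreal) \<le> ennreal T"
proof -
  have "(\<Sum>l\<in>{1..L}. of_bool (real l \<le> T) :: real) \<le> max 0 T"
  proof (induction L)
    case (Suc L)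
    show ?case
    proof (cases "real (Suc L) \<le> T")
      case True
      have "(\<Sum>l\<in>{1..L}. of_bool (real l \<le> T) :: real) \<le> real L"
        using sum_bounded_above[of "{1..L}" "\<lambda>l. of_bool (real l \<le> T) :: real" 1] by simp
      then show ?thesis using True by (simp add: sum.cl_ivl_Suc)
    qed (use Suc.IH in \<open>simp add: sum.cl_ivl_Suc\<close>)
  qed simp
  moreover have "(\<Sum>l\<in>{1..L}. of_bool (real l \<le> T) :: ennreal) = ennreal (\<Sum>l\<in>{1..L}. of_bool (real l \<le> T))"
  proof -
    have ennreal_of_bool: "(of_bool P :: ennreal) = ennreal (of_bool P)" for P
      by (cases P) simp_all
    show ?thesis unfolding ennreal_of_bool by (rule sum_ennreal) simp
  qed
  ultimately show ?thesis
    by (cases "0 \<le> T") (auto simp: max_def ennreal_neg intro: ennreal_leI)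
qed

lemma ln_le_sum_inverse_Suc: "ln (real L + 1) \<le> 2 * (\<Sum>l=1..L. 1 / (1 + real l))"
proof -
  have "ln (real L + 1) \<le> harm L" by (rule ln_le_harm)
  also have "\<dots> \<le> (\<Sum>l=1..L. 2 / (1 + real l))"
    unfolding harm_def
  proof (intro sum_mono)
    fix l assume "l \<in> {1..L}"
    then have "1 \<le> l" by simp
    then show "inverse (of_nat l) \<le> 2 / (1 + real l)"
      by (simp add: inverse_eq_divide field_simps)
  qed
  finally show ?thesis by (simp add: sum_distrib_left)
qed

section \<open>Exponential clocks\<close>

lemma prob_space_exp1: "prob_space exp1"
  unfolding exp1_def by (rule prob_space_exponential_density) simp

lemma space_exp1 [simp]: "space exp1 = UNIV"
  and sets_exp1 [simp, measurable_cong]: "sets exp1 = sets borel"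
  unfolding exp1_def by auto

lemma distributed_exp1: "distributed exp1 lborel (\<lambda>x. x) (exponential_density 1)"
  unfolding distributed_def exp1_def
  by (auto simp: distr_id2 AE_I2 exponential_density_nonneg)

lemma emeasure_exp1_greater:
  assumes "0 \<le> a" shows "emeasure exp1 {x. a < x} = ennreal (exp (- a))"
proof -
  interpret prob_space exp1 by (rule prob_space_exp1)
  have "\<P>(x in exp1. a < x) = exp (- a * 1)"
    by (rule exponential_distributedD_gt[OF distributed_exp1 assms]) simp
  then show ?thesis by (simp add: emeasure_eq_measure)
qed

lemma emeasure_exp1_atMost:
  assumes "0 \<le> a" shows "emeasure exp1 {x. x \<le> a} = ennreal (1 - exp (- a))"
proof -
  interpret prob_space exp1 by (rule prob_space_exp1)
  have "\<P>(x in exp1. x \<le> a) = 1 - exp (- a * 1)"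
    by (rule exponential_distributedD_le[OF distributed_exp1 assms]) simp
  then show ?thesis by (simp add: emeasure_eq_measure)
qed

lemma AE_exp1_nonneg: "AE x in exp1. 0 \<le> x"
  unfolding exp1_def by (subst AE_density) (auto simp: exponential_density_def)

abbreviation exp1_PiM :: "(nat \<times> nat \<times> nat \<Rightarrow> real) measure" where
  "exp1_PiM \<equiv> PiM UNIV (\<lambda>_. exp1)"

lemma product_prob_space_exp1: "product_prob_space (\<lambda>_. exp1)"
  using prob_space_exp1 by (simp add: product_prob_space_def product_prob_space_axioms_def
      product_sigma_finite_def prob_space_imp_sigma_finite)

section \<open>Relay profiles\<close>

abbreviation lborel_PiM :: "nat \<Rightarrow> (nat \<Rightarrow> real) measure" where
  "lborel_PiM d \<equiv> PiM {..<d} (\<lambda>_. lborel)"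

definition orthant_ball :: "nat \<Rightarrow> (nat \<Rightarrow> real) set" where
  "orthant_ball d = {x \<in> space (lborel_PiM d). (\<forall>i<d. 0 \<le> x i) \<and> (\<Sum>i<d. (x i)^2) \<le> 1}"

lemma orthant_ball_sets [measurable]: "orthant_ball d \<in> sets (lborel_PiM d)"
  unfolding orthant_ball_def by measurable

lemma orthant_ball_le_1:
  assumes "x \<in> orthant_ball d" "i < d" shows "0 \<le> x i" "x i \<le> 1"
proof -
  have "(x i)^2 \<le> (\<Sum>j<d. (x j)^2)"
    using assms(2) by (intro member_le_sum) auto
  also have "\<dots> \<le> 1" using assms(1) by (simp add: orthant_ball_def)
  finally show "x i \<le> 1" by (simp add: abs_square_le_1)
  show "0 \<le> x i" using assms by (simp add: orthant_ball_def)
qed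

lemma product_sigma_finite_lborel: "product_sigma_finite (\<lambda>_. lborel :: real measure)"
  unfolding product_sigma_finite_def by (auto intro: lborel.sigma_finite_measure_axioms)

lemma emeasure_lborel_PiM_cube:
  "emeasure (lborel_PiM d) (PiE {..<d} (\<lambda>_. {0..a})) = ennreal (max 0 a) ^ d"
proof -
  have "emeasure (lborel_PiM d) (PiE {..<d} (\<lambda>_. {0..a})) = (\<Prod>i<d. emeasure lborel {0..a})"
    by (rule product_sigma_finite.emeasure_PiM[OF product_sigma_finite_lborel]) auto
  then show ?thesis by (simp add: max_def)
qed

lemma emeasure_orthant_ball_pos:
  assumes "d \<ge> 1" shows "emeasure (lborel_PiM d) (orthant_ball d) \<noteq> 0"
proof -
  have "PiE {..<d} (\<lambda>_. {0..1/real d}) \<subseteq> orthant_ball d"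
  proof
    fix x assume x: "x \<in> PiE {..<d} (\<lambda>_. {0..1/real d})"
    then have x_bounds: "0 \<le> x i" "x i \<le> 1 / real d" if "i < d" for i
      using that by (auto simp: PiE_iff)
    have "(\<Sum>i<d. (x i)^2) \<le> (\<Sum>i<d. 1 / real d)"
    proof (rule sum_mono)
      fix i assume "i \<in> {..<d}"
      with x_bounds[of i] assms have "0 \<le> x i" "x i \<le> 1" "x i \<le> 1 / real d"
        by (auto intro: order_trans[of _ "1 / real d"])
      then show "(x i)^2 \<le> 1 / real d"
        by (metis mult_left_le order_trans power2_eq_square)
    qed
    also have "\<dots> = 1" using assms by simp
    finally show "x \<in> orthant_ball d"
      using x x_bounds by (auto simp: orthant_ball_def space_PiM PiE_iff)
  qed
  then have "emeasure (lborel_PiM d) (PiE {..<d} (\<lambda>_. {0..1/real d})) \<le> emeasure (lborel_PiM d) (orthant_ball d)"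
    by (rule emeasure_mono[OF _ orthant_ball_sets])
  moreover have "emeasure (lborel_PiM d) (PiE {..<d} (\<lambda>_. {0..1/real d})) \<noteq> 0"
    using assms by (simp add: emeasure_lborel_PiM_cube)
  ultimately show ?thesis by (metis le_zero_eq)
qed

lemma emeasure_orthant_ball_finite: "emeasure (lborel_PiM d) (orthant_ball d) \<noteq> \<infinity>"
proof -
  have "orthant_ball d \<subseteq> PiE {..<d} (\<lambda>_. {0..1})"
  proof
    fix x assume x: "x \<in> orthant_ball d"
    then show "x \<in> PiE {..<d} (\<lambda>_. {0..1})"
      using orthant_ball_le_1[OF x] by (auto simp: orthant_ball_def space_PiM PiE_iff)
  qed
  then have "emeasure (lborel_PiM d) (orthant_ball d) \<le> emeasure (lborel_PiM d) (PiE {..<d} (\<lambda>_. {0..1}))"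
    by (intro emeasure_mono sets_PiM_I_finite) auto
  then show ?thesis by (auto simp: emeasure_lborel_PiM_cube top_unique)
qed

lemma orthant_sphere_eq:
  "orthant_sphere d = distr (uniform_measure (lborel_PiM d) (orthant_ball d)) (lborel_PiM d)
     (\<lambda>x. restrict (\<lambda>i. x i / sqrt (\<Sum>j<d. (x j)^2)) {..<d})"
  unfolding orthant_sphere_def orthant_ball_def ..

lemma sets_orthant_sphere [measurable_cong]: "sets (orthant_sphere d) = sets (lborel_PiM d)"
  unfolding orthant_sphere_def by simp

lemma prob_space_orthant_sphere: "d \<ge> 1 \<Longrightarrow> prob_space (orthant_sphere d)"
  unfolding orthant_sphere_eq
  by (intro prob_space.prob_space_distr prob_space_uniform_measure emeasure_orthant_ball_pos
        emeasure_orthant_ball_finite) auto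

lemma AE_orthant_sphere_le_1: "AE u in orthant_sphere d. \<forall>i<d. 0 \<le> u i \<and> u i \<le> 1"
  unfolding orthant_sphere_eq
proof (subst AE_distr_iff)
  show "AE x in uniform_measure (lborel_PiM d) (orthant_ball d).
      \<forall>i<d. 0 \<le> restrict (\<lambda>i. x i / sqrt (\<Sum>j<d. (x j)^2)) {..<d} i
        \<and> restrict (\<lambda>i. x i / sqrt (\<Sum>j<d. (x j)^2)) {..<d} i \<le> 1"
  proof (rule AE_uniform_measureI[OF orthant_ball_sets], intro AE_I2 impI allI)
    fix x i assume x: "x \<in> orthant_ball d" and i: "i < d"
    have "(x i)^2 \<le> (\<Sum>j<d. (x j)^2)"
      using i by (intro member_le_sum) auto
    then have "x i \<le> sqrt (\<Sum>j<d. (x j)^2)"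
      using real_sqrt_le_mono orthant_ball_le_1[OF x i] by fastforce
    moreover have "0 \<le> sqrt (\<Sum>j<d. (x j)^2)" by (simp add: sum_nonneg)
    ultimately show "0 \<le> restrict (\<lambda>i. x i / sqrt (\<Sum>j<d. (x j)^2)) {..<d} i
        \<and> restrict (\<lambda>i. x i / sqrt (\<Sum>j<d. (x j)^2)) {..<d} i \<le> 1"
      using i orthant_ball_le_1[OF x i] by (auto simp: divide_le_eq_1)
  qed
qed measurable

abbreviation uniform_angle :: "real measure" where
  "uniform_angle \<equiv> uniform_measure lborel {0..pi/2}"

definition relay_profile :: "nat \<Rightarrow> real \<times> (nat \<Rightarrow> real) \<Rightarrow> nat \<Rightarrow> real" where
  "relay_profile m = (\<lambda>(\<theta>, u). restrict (\<lambda>i. if i = 0 then cos \<theta> else sin \<theta> * u (i - 1)) {..<m})"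

lemma relay_dist_eq:
  "relay_dist m = distr (uniform_angle \<Otimes>\<^sub>M orthant_sphere (m - 1)) (lborel_PiM m) (relay_profile m)"
  unfolding relay_dist_def relay_profile_def ..

lemma relay_profile_0: "0 < m \<Longrightarrow> relay_profile m (\<theta>, u) 0 = cos \<theta>"
  by (simp add: relay_profile_def)

lemma relay_profile_1: "1 < m \<Longrightarrow> relay_profile m (\<theta>, u) 1 = sin \<theta> * u 0"
  by (simp add: relay_profile_def)

lemma measurable_relay_profile [measurable]:
  "relay_profile m \<in> measurable (uniform_angle \<Otimes>\<^sub>M orthant_sphere (m - 1)) (lborel_PiM m)"
  unfolding relay_profile_def split_beta'
proof (rule measurable_restrict)
  fix i assume i: "i \<in> {..<m}"
  show "(\<lambda>x. if i = 0 then cos (fst x) else sin (fst x) * snd x (i - 1))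
      \<in> measurable (uniform_angle \<Otimes>\<^sub>M orthant_sphere (m - 1)) lborel"
  proof (cases "i = 0")
    case False
    have "(\<lambda>u. u (i - 1)) \<in> measurable (lborel_PiM (m - 1)) lborel"
      using i False by (intro measurable_component_singleton) auto
    then have [measurable]: "(\<lambda>u. u (i - 1)) \<in> borel_measurable (orthant_sphere (m - 1))"
      by (simp add: measurable_cong_sets[OF sets_orthant_sphere refl])
    have "(\<lambda>x. sin (fst x) * snd x (i - 1)) \<in> borel_measurable (uniform_angle \<Otimes>\<^sub>M orthant_sphere (m - 1))"
      by measurable
    then show ?thesis using False by simp
  qed simp
qed

lemma sets_relay_dist [measurable_cong]: "sets (relay_dist m) = sets (lborel_PiM m)"
  unfolding relay_dist_eq by simp

lemma prob_space_relay_dist: "m \<ge> 2 \<Longrightarrow> prob_space (relay_dist m)"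
  unfolding relay_dist_eq
  by (intro prob_space.prob_space_distr prob_space_pair prob_space_uniform_measure
        prob_space_orthant_sphere measurable_relay_profile) auto

(* Stated for all indices: outside the index sets the components are constantly undefined on the
   extensional product spaces. This lets the measurability prover handle quantifiers over relays. *)
lemma borel_measurable_relay_dist_component:
  "(\<lambda>v. v k) \<in> borel_measurable (relay_dist m)"
proof (cases "k < m")
  case True
  then have "(\<lambda>v. v k) \<in> measurable (lborel_PiM m) lborel"
    by (intro measurable_component_singleton) auto
  then show ?thesis by (simp add: measurable_cong_sets[OF sets_relay_dist refl])
next
  case False
  have "v k = undefined" if "v \<in> space (relay_dist m)" for v
    using that False by (simp add: space_PiM PiE_def extensional_def cong: sets_eq_imp_space_eq[OF sets_relay_dist])
  then show ?thesis by (subst measurable_cong[of _ _ "\<lambda>_. undefined"]) auto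
qed

lemma borel_measurable_profiles_component:
  "(\<lambda>\<rho>. \<rho> j k) \<in> borel_measurable (PiM {..<n} (\<lambda>_. relay_dist m))"
proof (cases "j < n")
  case True
  then have "(\<lambda>\<rho>. \<rho> j) \<in> measurable (PiM {..<n} (\<lambda>_. relay_dist m)) (relay_dist m)"
    by (intro measurable_component_singleton) auto
  then show ?thesis by (rule measurable_compose[OF _ borel_measurable_relay_dist_component])
next
  case False
  have "\<rho> j k = undefined k" if "\<rho> \<in> space (PiM {..<n} (\<lambda>_. relay_dist m))" for \<rho>
    using that False by (simp add: space_PiM PiE_def extensional_def)
  then show ?thesis by (subst measurable_cong[of _ _ "\<lambda>_. undefined k"]) auto
qed

lemma nn_integral_relay_dist_lower_bound:
  assumes m: "m \<ge> 2" and F [measurable]: "F \<in> borel_measurable (lborel_PiM m)"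
    and b: "0 \<le> b" "b \<le> pi/2"
    and bound: "\<And>\<theta> u. \<theta> \<in> {0..b} \<Longrightarrow> (\<forall>i<m-1. 0 \<le> u i \<and> u i \<le> 1)
      \<Longrightarrow> ennreal c \<le> F (relay_profile m (\<theta>, u))"
  shows "ennreal c * ennreal (b / (pi/2)) \<le> (\<integral>\<^sup>+v. F v \<partial>relay_dist m)"
proof -
  interpret OS: prob_space "orthant_sphere (m - 1)"
    by (rule prob_space_orthant_sphere) (use m in simp)
  have "ennreal c * ennreal (b / (pi/2)) = ennreal c * emeasure uniform_angle {0..b}"
    using b by (simp add: divide_ennreal Int_absorb1)
  also have "\<dots> = (\<integral>\<^sup>+\<theta>. ennreal c * indicator {0..b} \<theta> \<partial>uniform_angle)"
    by (simp add: nn_integral_cmult_indicator)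
  also have "\<dots> \<le> (\<integral>\<^sup>+\<theta>. \<integral>\<^sup>+u. F (relay_profile m (\<theta>, u)) \<partial>orthant_sphere (m - 1) \<partial>uniform_angle)"
  proof (rule nn_integral_mono)
    fix \<theta>
    have "ennreal c \<le> (\<integral>\<^sup>+u. F (relay_profile m (\<theta>, u)) \<partial>orthant_sphere (m - 1))"
      if "\<theta> \<in> {0..b}"
    proof -
      have "(\<integral>\<^sup>+u. ennreal c \<partial>orthant_sphere (m - 1)) \<le> (\<integral>\<^sup>+u. F (relay_profile m (\<theta>, u)) \<partial>orthant_sphere (m - 1))"
        by (rule nn_integral_mono_AE[OF AE_mp[OF AE_orthant_sphere_le_1 AE_I2]])
          (auto intro: bound that)
      then show ?thesis using OS.emeasure_space_1 by simp
    qed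
    then show "ennreal c * indicator {0..b} \<theta> \<le> (\<integral>\<^sup>+u. F (relay_profile m (\<theta>, u)) \<partial>orthant_sphere (m - 1))"
      by (cases "\<theta> \<in> {0..b}") auto
  qed
  also have "\<dots> = (\<integral>\<^sup>+x. F (relay_profile m x) \<partial>(uniform_angle \<Otimes>\<^sub>M orthant_sphere (m - 1)))"
    by (rule OS.nn_integral_fst) measurable
  also have "\<dots> = (\<integral>\<^sup>+v. F v \<partial>relay_dist m)"
    unfolding relay_dist_eq by (rule nn_integral_distr[symmetric, OF measurable_relay_profile]) simp
  finally show ?thesis .
qed

section \<open>Meeting rates and meeting times\<close>

lemma inner_m_unit_vec_left: "i < m \<Longrightarrow> inner_m m (unit_vec m i) v = v i"
  unfolding inner_m_def unit_vec_def by (simp add: if_distrib if_distribR cong: if_cong)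

lemma inner_m_unit_vec_right: "i < m \<Longrightarrow> inner_m m v (unit_vec m i) = v i"
  unfolding inner_m_def unit_vec_def by (simp add: if_distrib if_distribR cong: if_cong)

definition rate_to_source :: "real \<Rightarrow> real \<Rightarrow> (nat \<Rightarrow> real) \<Rightarrow> real" where
  "rate_to_source lam del v = pi/2 * (lam - del) * v 0 + del"

definition rate_to_dest :: "real \<Rightarrow> real \<Rightarrow> (nat \<Rightarrow> real) \<Rightarrow> real" where
  "rate_to_dest lam del v = pi/2 * (lam - del) * v 1 + del"

lemma meet_rate_source_dest: "2 \<le> m \<Longrightarrow> meet_rate m lam del \<rho> 0 1 = del"
  using inner_m_unit_vec_left[of 0 m "unit_vec m 1"]
  by (simp add: meet_rate_def node_profile_def unit_vec_def)

lemma meet_rate_source_relay: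
  "2 \<le> m \<Longrightarrow> meet_rate m lam del \<rho> 0 (i + 2) = rate_to_source lam del (\<rho> i)"
  by (simp add: meet_rate_def node_profile_def inner_m_unit_vec_left rate_to_source_def)

lemma meet_rate_relay_dest:
  "2 \<le> m \<Longrightarrow> meet_rate m lam del \<rho> (i + 2) 1 = rate_to_dest lam del (\<rho> i)"
  by (simp add: meet_rate_def node_profile_def inner_m_unit_vec_right rate_to_dest_def)

lemma meet_time_0: "meet_time m lam del \<rho> \<omega> a b 0 = \<omega> (min a b, max a b, 0) / meet_rate m lam del \<rho> a b"
  by (simp add: meet_time_def)

lemma meet_time_le_next_meet:
  assumes nonneg: "\<forall>c. 0 \<le> \<omega> c" and rate: "0 < meet_rate m lam del \<rho> a b"
    and t: "t < meet_time m lam del \<rho> \<omega> a b 0"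
  shows "meet_time m lam del \<rho> \<omega> a b 0 \<le> next_meet m lam del \<rho> \<omega> a b t"
proof -
  have "meet_time m lam del \<rho> \<omega> a b 0 \<le> meet_time m lam del \<rho> \<omega> a b q" for q
    unfolding meet_time_def using nonneg rate
    by (intro divide_right_mono sum_mono2) auto
  then show ?thesis
    unfolding next_meet_def using t by (intro cInf_greatest) auto
qed

lemma borel_measurable_fm_space_profile [measurable]: "(\<lambda>x. fst x j k) \<in> borel_measurable (fm_space m n)"
  unfolding fm_space_def by (rule measurable_compose[OF measurable_fst borel_measurable_profiles_component])

lemma borel_measurable_fm_space_clock [measurable]: "(\<lambda>x. snd x c) \<in> borel_measurable (fm_space m n)"
proof -
  have "(\<lambda>\<omega>. \<omega> c) \<in> measurable exp1_PiM exp1"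
    by (rule measurable_component_singleton) simp
  then show ?thesis
    unfolding fm_space_def by (intro measurable_compose[OF measurable_snd]) simp
qed

lemma AE_fm_space_clocks_nonneg:
  assumes m: "2 \<le> m" shows "AE x in fm_space m n. \<forall>c. 0 \<le> snd x c"
proof -
  interpret relays: prob_space "PiM {..<n} (\<lambda>_. relay_dist m)"
    by (rule prob_space_PiM) (rule prob_space_relay_dist[OF m])
  interpret exp1_PiM: prob_space exp1_PiM
    by (rule prob_space_PiM[OF prob_space_exp1])
  interpret pair_sigma_finite "PiM {..<n} (\<lambda>_. relay_dist m)" exp1_PiM ..
  have "Measurable.pred (fm_space m n) (\<lambda>x. \<forall>c. 0 \<le> snd x c)"
    by (intro pred_intros_countable) measurable
  moreover have "AE \<omega> in exp1_PiM. \<forall>c. 0 \<le> \<omega> c"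
    unfolding AE_all_countable
    by (intro allI product_prob_space.AE_component[OF product_prob_space_exp1] AE_exp1_nonneg) simp
  ultimately show ?thesis
    unfolding fm_space_def by (intro AE_pair_measure) auto
qed

section \<open>The delay event\<close>

(* The rate conditions hold almost surely; they turn each first meeting time into a threshold
   condition on a single Exp(1) clock (delay_event_iff_thresholds). *)
definition delay_event :: "nat \<Rightarrow> real \<Rightarrow> real \<Rightarrow> nat \<Rightarrow> real \<Rightarrow> real \<Rightarrow> nat
    \<Rightarrow> (nat \<Rightarrow> (nat \<Rightarrow> real)) \<times> (nat \<times> nat \<times> nat \<Rightarrow> real) \<Rightarrow> bool" where
  "delay_event m lam del n \<alpha> s i = (\<lambda>(\<rho>, \<omega>).
     (\<forall>j<n. 0 < rate_to_source lam del (\<rho> j)) \<and> 0 < rate_to_dest lam del (\<rho> i) \<and>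
     meet_time m lam del \<rho> \<omega> 0 (i + 2) 0 \<le> \<alpha> \<and>
     (\<forall>j<n. j \<noteq> i \<longrightarrow> \<alpha> < meet_time m lam del \<rho> \<omega> 0 (j + 2) 0) \<and>
     \<alpha> + s < meet_time m lam del \<rho> \<omega> 0 1 0 \<and>
     \<alpha> + s < meet_time m lam del \<rho> \<omega> (i + 2) 1 0)"

lemma delay_event_unique:
  assumes "delay_event m lam del n \<alpha> s i x" "delay_event m lam del n \<alpha> s' j x" "i < n" "j < n"
  shows "i = j"
  using assms by (cases x) (auto simp: delay_event_def not_less[symmetric])

lemma fm_T2_ge_of_delay_event:
  assumes m: "2 \<le> m" and i: "i < n" and del: "0 < del" and s: "0 \<le> s"
    and nonneg: "\<forall>c. 0 \<le> \<omega> c" and E: "delay_event m lam del n \<alpha> s i (\<rho>, \<omega>)"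
  shows "s \<le> fm_T2 m lam del n (\<rho>, \<omega>)"
proof -
  define t where "t a b = meet_time m lam del \<rho> \<omega> a b 0" for a b
  have t_relay: "t 0 (i + 2) \<le> \<alpha>" and t_others: "\<And>j. j < n \<Longrightarrow> j \<noteq> i \<Longrightarrow> \<alpha> < t 0 (j + 2)"
    and t_source_dest: "\<alpha> + s < t 0 1" and t_relay_dest: "\<alpha> + s < t (i + 2) 1"
    and rate_pos: "0 < rate_to_dest lam del (\<rho> i)"
    using E by (auto simp: delay_event_def t_def)
  have "(ARG_MIN (\<lambda>x. t 0 x) x. x \<in> {1..<n+2}) = i + 2"
  proof (rule arg_min_eqI)
    fix x assume "x \<in> {1..<n+2}" "x \<noteq> i + 2"
    then consider "x = 1" | "x = (x - 2) + 2" "x - 2 < n" "x - 2 \<noteq> i"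
      by fastforce
    then show "t 0 (i + 2) < t 0 x"
    proof cases
      case 1
      then show ?thesis using t_relay t_source_dest s by simp
    next
      case 2
      then show ?thesis using t_relay t_others[of "x - 2"] by simp
    qed
  qed (use i in auto)
  then have T2: "fm_T2 m lam del n (\<rho>, \<omega>) =
      min (next_meet m lam del \<rho> \<omega> 0 1 (t 0 (i + 2))) (next_meet m lam del \<rho> \<omega> (i + 2) 1 (t 0 (i + 2)))
        - t 0 (i + 2)"
    by (simp add: fm_T2_def t_def Let_def)
  have "t 0 1 \<le> next_meet m lam del \<rho> \<omega> 0 1 (t 0 (i + 2))"
    unfolding t_def using t_relay t_source_dest s del meet_rate_source_dest[OF m, of lam del \<rho>]
    by (intro meet_time_le_next_meet nonneg) (auto simp: t_def)
  moreover have "t (i + 2) 1 \<le> next_meet m lam del \<rho> \<omega> (i + 2) 1 (t 0 (i + 2))"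
    unfolding t_def using t_relay t_relay_dest s rate_pos meet_rate_relay_dest[OF m, of lam del \<rho> i]
    by (intro meet_time_le_next_meet nonneg) (auto simp: t_def)
  ultimately show ?thesis
    unfolding T2 using t_relay t_source_dest t_relay_dest by linarith
qed

lemma sum_delay_events_le_fm_T2:
  assumes m: "2 \<le> m" and del: "0 < del" and nonneg: "\<forall>c. 0 \<le> \<omega> c"
  shows "(\<Sum>l\<in>{1..L}. \<Sum>i<n. of_bool (delay_event m lam del n \<alpha> (real l) i (\<rho>, \<omega>)) :: ennreal)
    \<le> ennreal (fm_T2 m lam del n (\<rho>, \<omega>))"
proof -
  have "(\<Sum>i<n. of_bool (delay_event m lam del n \<alpha> (real l) i (\<rho>, \<omega>)) :: ennreal)
      \<le> of_bool (real l \<le> fm_T2 m lam del n (\<rho>, \<omega>))" for l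
  proof (cases "\<exists>i<n. delay_event m lam del n \<alpha> (real l) i (\<rho>, \<omega>)")
    case True
    then obtain i where i: "i < n" "delay_event m lam del n \<alpha> (real l) i (\<rho>, \<omega>)" by blast
    have "(\<Sum>j<n. of_bool (delay_event m lam del n \<alpha> (real l) j (\<rho>, \<omega>)) :: ennreal)
        = (\<Sum>j<n. if j = i then 1 else 0)"
    proof (rule sum.cong[OF refl])
      fix j assume "j \<in> {..<n}"
      then have "delay_event m lam del n \<alpha> (real l) j (\<rho>, \<omega>) \<longleftrightarrow> j = i"
        using delay_event_unique[of m lam del n \<alpha> "real l" j "(\<rho>, \<omega>)" "real l" i] i by auto
      then show "of_bool (delay_event m lam del n \<alpha> (real l) j (\<rho>, \<omega>)) = (if j = i then 1 else 0 :: ennreal)"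
        by simp
    qed
    moreover have "real l \<le> fm_T2 m lam del n (\<rho>, \<omega>)"
      using fm_T2_ge_of_delay_event[OF m i(1) del _ nonneg i(2)] by simp
    ultimately show ?thesis using i(1) by simp
  qed simp
  then have "(\<Sum>l\<in>{1..L}. \<Sum>i<n. of_bool (delay_event m lam del n \<alpha> (real l) i (\<rho>, \<omega>)) :: ennreal)
      \<le> (\<Sum>l\<in>{1..L}. of_bool (real l \<le> fm_T2 m lam del n (\<rho>, \<omega>)))"
    by (intro sum_mono)
  also have "\<dots> \<le> ennreal (fm_T2 m lam del n (\<rho>, \<omega>))"
    by (rule sum_of_bool_le_threshold)
  finally show ?thesis .
qed

lemma delay_event_iff_thresholds:
  assumes m: "2 \<le> m" and del: "0 < del" and i: "i < n"
  shows "delay_event m lam del n \<alpha> s i x \<longleftrightarrow>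
     (\<forall>j<n. 0 < rate_to_source lam del (fst x j)) \<and> 0 < rate_to_dest lam del (fst x i) \<and>
     snd x (0, i + 2, 0) \<le> \<alpha> * rate_to_source lam del (fst x i) \<and>
     (\<forall>j<n. j \<noteq> i \<longrightarrow> \<alpha> * rate_to_source lam del (fst x j) < snd x (0, j + 2, 0)) \<and>
     (\<alpha> + s) * del < snd x (0, 1, 0) \<and>
     (\<alpha> + s) * rate_to_dest lam del (fst x i) < snd x (1, i + 2, 0)"
  using meet_rate_source_dest[OF m, of lam del "fst x"] meet_rate_source_relay[OF m, of lam del "fst x"]
    meet_rate_relay_dest[OF m, of lam del "fst x" i] del i
  by (cases x) (auto simp: delay_event_def meet_time_0 pos_divide_le_eq pos_less_divide_eq mult.commute)

lemma measurable_delay_event: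
  assumes "2 \<le> m" "0 < del" "i < n"
  shows "Measurable.pred (fm_space m n) (delay_event m lam del n \<alpha> s i)"
  unfolding delay_event_iff_thresholds[OF assms, abs_def] rate_to_source_def rate_to_dest_def
  by measurable

section \<open>Probability of the delay event\<close>

definition missed_relay_prob :: "real \<Rightarrow> real \<Rightarrow> real \<Rightarrow> (nat \<Rightarrow> real) \<Rightarrow> ennreal" where
  "missed_relay_prob lam del \<alpha> v =
     of_bool (0 < rate_to_source lam del v) * ennreal (exp (- (\<alpha> * rate_to_source lam del v)))"

definition chosen_relay_prob :: "real \<Rightarrow> real \<Rightarrow> real \<Rightarrow> real \<Rightarrow> (nat \<Rightarrow> real) \<Rightarrow> ennreal" where
  "chosen_relay_prob lam del \<alpha> s v =
     of_bool (0 < rate_to_source lam del v \<and> 0 < rate_to_dest lam del v) *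
     ennreal ((1 - exp (- (\<alpha> * rate_to_source lam del v))) * exp (- ((\<alpha> + s) * rate_to_dest lam del v)))"

lemma borel_measurable_missed_relay_prob [measurable]:
  "missed_relay_prob lam del \<alpha> \<in> borel_measurable (relay_dist m)"
  using borel_measurable_relay_dist_component[of 0 m]
  unfolding missed_relay_prob_def rate_to_source_def by measurable

lemma borel_measurable_chosen_relay_prob [measurable]:
  "chosen_relay_prob lam del \<alpha> s \<in> borel_measurable (relay_dist m)"
  using borel_measurable_relay_dist_component[of 0 m] borel_measurable_relay_dist_component[of 1 m]
  unfolding chosen_relay_prob_def rate_to_source_def rate_to_dest_def by measurable

lemma nn_integral_delay_event_given_positive_rates:
  assumes m: "2 \<le> m" and i: "i < n" and \<alpha>: "0 \<le> \<alpha>" and s: "0 \<le> s" and del: "0 < del"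
    and rates: "\<forall>j<n. 0 < rate_to_source lam del (\<rho> j)" "0 < rate_to_dest lam del (\<rho> i)"
  shows "(\<integral>\<^sup>+\<omega>. of_bool (delay_event m lam del n \<alpha> s i (\<rho>, \<omega>)) \<partial>exp1_PiM) =
    ennreal (exp (- ((\<alpha> + s) * del))) * (ennreal (exp (- ((\<alpha> + s) * rate_to_dest lam del (\<rho> i))))
      * (\<Prod>j<n. if j = i then ennreal (1 - exp (- (\<alpha> * rate_to_source lam del (\<rho> i))))
          else ennreal (exp (- (\<alpha> * rate_to_source lam del (\<rho> j))))))"
proof -
  define rs where "rs j = rate_to_source lam del (\<rho> j)" for j
  define rd where "rd = rate_to_dest lam del (\<rho> i)"
  \<comment> \<open>The event only involves the first clocks J of the pairs {S,D}, {R_(i+1),D} and {S,R_(j+1)};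
    clock c has to fall into X c.\<close>
  define J :: "(nat \<times> nat \<times> nat) set"
    where "J = insert (0, 1, 0) (insert (1, i + 2, 0) ((\<lambda>j. (0, j + 2, 0)) ` {..<n}))"
  define X where "X c = (if c = (0, 1, 0) then {x. (\<alpha> + s) * del < x}
    else if c = (1, i + 2, 0) then {x. (\<alpha> + s) * rd < x}
    else if c = (0, i + 2, 0) then {x. x \<le> \<alpha> * rs i}
    else {x. \<alpha> * rs (fst (snd c) - 2) < x})" for c :: "nat \<times> nat \<times> nat"
  have rs: "0 < rs j" if "j < n" for j
    using rates(1) that by (simp add: rs_def)
  have rd: "0 < rd" using rates(2) by (simp add: rd_def)
  have event: "{\<omega> \<in> space exp1_PiM. delay_event m lam del n \<alpha> s i (\<rho>, \<omega>)}
      = {\<omega> \<in> space exp1_PiM. \<forall>c\<in>J. \<omega> c \<in> X c}"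
    using rates i by (auto simp: delay_event_iff_thresholds[OF m del i] J_def X_def rs_def rd_def)
  have [measurable]: "X c \<in> sets borel" for c by (simp add: X_def)
  have "finite J" by (simp add: J_def)
  then have "{\<omega> \<in> space exp1_PiM. \<forall>c\<in>J. \<omega> c \<in> X c} \<in> sets exp1_PiM" by measurable
  with event have "(\<integral>\<^sup>+\<omega>. of_bool (delay_event m lam del n \<alpha> s i (\<rho>, \<omega>)) \<partial>exp1_PiM)
      = emeasure exp1_PiM {\<omega> \<in> space exp1_PiM. \<forall>c\<in>J. \<omega> c \<in> X c}"
    by (rule nn_integral_of_bool_eq_emeasure)
  also have "\<dots> = (\<Prod>c\<in>J. emeasure exp1 (X c))"
    by (rule product_prob_space.emeasure_PiM_Collect[OF product_prob_space_exp1])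
      (auto simp: J_def X_def)
  also have "\<dots> = emeasure exp1 (X (0, 1, 0)) * (emeasure exp1 (X (1, i + 2, 0))
      * (\<Prod>j<n. emeasure exp1 (X (0, j + 2, 0))))"
    unfolding J_def by (simp add: prod.reindex inj_on_def image_iff)
  also have "\<dots> = ennreal (exp (- ((\<alpha> + s) * del))) * (ennreal (exp (- ((\<alpha> + s) * rd)))
      * (\<Prod>j<n. if j = i then ennreal (1 - exp (- (\<alpha> * rs i))) else ennreal (exp (- (\<alpha> * rs j)))))"
  proof -
    have "emeasure exp1 (X (0, j + 2, 0)) =
        (if j = i then ennreal (1 - exp (- (\<alpha> * rs i))) else ennreal (exp (- (\<alpha> * rs j))))"
      if "j < n" for j
      using \<alpha> rs[OF that] rs[OF i] by (auto simp: X_def emeasure_exp1_greater emeasure_exp1_atMost)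
    then have "(\<Prod>j<n. emeasure exp1 (X (0, j + 2, 0))) =
        (\<Prod>j<n. if j = i then ennreal (1 - exp (- (\<alpha> * rs i))) else ennreal (exp (- (\<alpha> * rs j))))"
      by (intro prod.cong) simp_all
    moreover have "emeasure exp1 (X (0, 1, 0)) = ennreal (exp (- ((\<alpha> + s) * del)))"
      using \<alpha> s del by (simp add: X_def emeasure_exp1_greater)
    moreover have "emeasure exp1 (X (1, i + 2, 0)) = ennreal (exp (- ((\<alpha> + s) * rd)))"
      using \<alpha> s rd by (simp add: X_def emeasure_exp1_greater)
    ultimately show ?thesis by simp
  qed
  finally show ?thesis by (simp only: rs_def rd_def)
qed

lemma nn_integral_delay_event_given_profiles:
  assumes m: "2 \<le> m" and i: "i < n" and \<alpha>: "0 \<le> \<alpha>" and s: "0 \<le> s" and del: "0 < del"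
  shows "(\<integral>\<^sup>+\<omega>. of_bool (delay_event m lam del n \<alpha> s i (\<rho>, \<omega>)) \<partial>exp1_PiM) =
    (\<Prod>j<n. if j = i then chosen_relay_prob lam del \<alpha> s (\<rho> j) else missed_relay_prob lam del \<alpha> (\<rho> j))
      * ennreal (exp (- ((\<alpha> + s) * del)))"
proof (cases "(\<forall>j<n. 0 < rate_to_source lam del (\<rho> j)) \<and> 0 < rate_to_dest lam del (\<rho> i)")
  case False
  then obtain j where j: "j < n"
    "(if j = i then chosen_relay_prob lam del \<alpha> s (\<rho> j) else missed_relay_prob lam del \<alpha> (\<rho> j)) = 0"
  proof -
    from False consider j where "j < n" "\<not> 0 < rate_to_source lam del (\<rho> j)"
      | "\<not> 0 < rate_to_dest lam del (\<rho> i)"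
      by blast
    then show ?thesis
    proof cases
      case (1 j)
      then show ?thesis by (intro that[of j]) (auto simp: chosen_relay_prob_def missed_relay_prob_def)
    next
      case 2
      then show ?thesis using i by (intro that[of i]) (simp_all add: chosen_relay_prob_def)
    qed
  qed
  then have "(\<Prod>j<n. if j = i then chosen_relay_prob lam del \<alpha> s (\<rho> j) else missed_relay_prob lam del \<alpha> (\<rho> j)) = 0"
    by (intro prod_zero bexI[of _ j]) simp_all
  moreover have "\<not> delay_event m lam del n \<alpha> s i (\<rho>, \<omega>)" for \<omega>
    using False by (auto simp: delay_event_iff_thresholds[OF m del i])
  ultimately show ?thesis by simp
next
  case True
  have "chosen_relay_prob lam del \<alpha> s (\<rho> i) = ennreal (1 - exp (- (\<alpha> * rate_to_source lam del (\<rho> i))))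
      * ennreal (exp (- ((\<alpha> + s) * rate_to_dest lam del (\<rho> i))))"
    using True i \<alpha> by (simp add: chosen_relay_prob_def ennreal_mult'')
  moreover have "missed_relay_prob lam del \<alpha> (\<rho> j) = ennreal (exp (- (\<alpha> * rate_to_source lam del (\<rho> j))))"
    if "j < n" for j
    using True that by (simp add: missed_relay_prob_def)
  then have "(\<Prod>j\<in>{..<n} - {i}. missed_relay_prob lam del \<alpha> (\<rho> j))
      = (\<Prod>j\<in>{..<n} - {i}. ennreal (exp (- (\<alpha> * rate_to_source lam del (\<rho> j)))))"
    by (intro prod.cong) simp_all
  ultimately show ?thesis
    using True nn_integral_delay_event_given_positive_rates[OF m i \<alpha> s del] i
    by (simp add: prod_lessThan_if_remove mult_ac)
qed

lemma nn_integral_delay_event: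
  assumes m: "2 \<le> m" and i: "i < n" and \<alpha>: "0 \<le> \<alpha>" and s: "0 \<le> s" and del: "0 < del"
  shows "(\<integral>\<^sup>+x. of_bool (delay_event m lam del n \<alpha> s i x) \<partial>fm_space m n) =
    (\<integral>\<^sup>+v. chosen_relay_prob lam del \<alpha> s v \<partial>relay_dist m)
      * (\<integral>\<^sup>+v. missed_relay_prob lam del \<alpha> v \<partial>relay_dist m) ^ (n - 1)
      * ennreal (exp (- ((\<alpha> + s) * del)))"
proof -
  define F where "F j = (if j = i then chosen_relay_prob lam del \<alpha> s else missed_relay_prob lam del \<alpha>)" for j
  have F_measurable: "F j \<in> borel_measurable (relay_dist m)" for j
    by (simp add: F_def)
  interpret exp1_PiM: prob_space exp1_PiM
    by (rule prob_space_PiM[OF prob_space_exp1])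
  interpret relays: product_sigma_finite "\<lambda>_. relay_dist m"
    unfolding product_sigma_finite_def
    using prob_space_imp_sigma_finite[OF prob_space_relay_dist[OF m]] by blast
  have "(\<integral>\<^sup>+x. of_bool (delay_event m lam del n \<alpha> s i x) \<partial>fm_space m n) =
      (\<integral>\<^sup>+\<rho>. \<integral>\<^sup>+\<omega>. of_bool (delay_event m lam del n \<alpha> s i (\<rho>, \<omega>)) \<partial>exp1_PiM \<partial>PiM {..<n} (\<lambda>_. relay_dist m))"
    using measurable_delay_event[OF m del i] unfolding fm_space_def
    by (intro exp1_PiM.nn_integral_fst[symmetric]) simp
  also have "\<dots> = (\<integral>\<^sup>+\<rho>. (\<Prod>j<n. F j (\<rho> j)) * ennreal (exp (- ((\<alpha> + s) * del))) \<partial>PiM {..<n} (\<lambda>_. relay_dist m))"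
    using nn_integral_delay_event_given_profiles[OF m i \<alpha> s del]
    by (simp add: F_def if_distrib[of "\<lambda>f. f _"])
  also have "\<dots> = (\<Prod>j<n. \<integral>\<^sup>+v. F j v \<partial>relay_dist m) * ennreal (exp (- ((\<alpha> + s) * del)))"
    using F_measurable
    by (simp add: nn_integral_multc relays.product_nn_integral_prod
        borel_measurable_prod_ennreal measurable_compose[OF measurable_component_singleton])
  also have "(\<Prod>j<n. \<integral>\<^sup>+v. F j v \<partial>relay_dist m) =
      (\<integral>\<^sup>+v. chosen_relay_prob lam del \<alpha> s v \<partial>relay_dist m)
        * (\<integral>\<^sup>+v. missed_relay_prob lam del \<alpha> v \<partial>relay_dist m) ^ (n - 1)"
    using i by (simp add: F_def if_distrib[of "\<lambda>f. integral\<^sup>N _ f"] prod_lessThan_if_remove)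
  finally show ?thesis .
qed

lemma rate_to_source_relay_profile_bounds:
  assumes m: "2 \<le> m" and del: "0 < del" "del \<le> lam" and \<theta>: "\<theta> \<in> {0..pi/2}"
  shows "del \<le> rate_to_source lam del (relay_profile m (\<theta>, u))"
    and "rate_to_source lam del (relay_profile m (\<theta>, u)) \<le> pi/2 * lam"
proof -
  have r_eq: "rate_to_source lam del (relay_profile m (\<theta>, u)) = pi/2 * (lam - del) * cos \<theta> + del"
    using m by (simp add: rate_to_source_def relay_profile_0)
  have "0 \<le> pi/2 * (lam - del)" "0 \<le> cos \<theta>"
    using del \<theta> by (auto intro: cos_ge_zero)
  moreover have "1 * del \<le> pi/2 * del"
    using del pi_gt3 by (intro mult_right_mono) auto
  ultimately show "del \<le> rate_to_source lam del (relay_profile m (\<theta>, u))"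
    and "rate_to_source lam del (relay_profile m (\<theta>, u)) \<le> pi/2 * lam"
    unfolding r_eq right_diff_distrib using mult_left_le[OF cos_le_one, of "pi/2 * (lam - del)" \<theta>]
    by (simp_all add: right_diff_distrib)
qed

lemma rate_to_source_relay_profile_ge:
  assumes m: "2 \<le> m" and del: "0 < del" "del \<le> lam / 2" and \<theta>: "0 \<le> \<theta>" "\<theta> \<le> 1"
  shows "pi/2 * lam / 4 \<le> rate_to_source lam del (relay_profile m (\<theta>, u))"
proof -
  define k where "k = pi/2 * (lam - del)"
  have "cos (pi/3) \<le> cos \<theta>"
    using \<theta> pi_gt3 by (intro cos_monotone_0_pi_le) auto
  then have "k * (1/2) \<le> k * cos \<theta>"
    using del by (intro mult_left_mono) (auto simp: cos_60 k_def)
  moreover have "pi/2 * del \<le> pi/2 * (lam / 2)"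
    using del by (intro mult_left_mono) auto
  moreover have "rate_to_source lam del (relay_profile m (\<theta>, u)) = k * cos \<theta> + del"
    using m by (simp add: rate_to_source_def relay_profile_0 k_def)
  moreover have "k = pi/2 * lam - pi/2 * del" "pi/2 * (lam / 2) = pi/2 * lam / 2"
    by (simp_all add: k_def right_diff_distrib)
  ultimately show ?thesis
    using del by linarith
qed

lemma rate_to_dest_relay_profile_bounds:
  assumes m: "2 \<le> m" and del: "0 < del" "del \<le> lam" and \<theta>: "\<theta> \<in> {0..pi/2}"
    and u: "0 \<le> u 0" "u 0 \<le> 1"
  shows "del \<le> rate_to_dest lam del (relay_profile m (\<theta>, u))"
    and "rate_to_dest lam del (relay_profile m (\<theta>, u)) \<le> pi/2 * (lam - del) * \<theta> + del"
proof -
  have q_eq: "rate_to_dest lam del (relay_profile m (\<theta>, u)) = pi/2 * (lam - del) * (sin \<theta> * u 0) + del"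
    using m relay_profile_1[of m \<theta> u] by (simp add: rate_to_dest_def)
  have "0 \<le> sin \<theta>" "sin \<theta> \<le> \<theta>"
    using \<theta> pi_gt3 by (auto intro: sin_ge_zero sin_x_le_x)
  then have "0 \<le> sin \<theta> * u 0" "sin \<theta> * u 0 \<le> \<theta>"
    using u by (auto intro: order_trans[OF mult_left_le])
  moreover have "0 \<le> pi/2 * (lam - del)" using del by simp
  ultimately show "del \<le> rate_to_dest lam del (relay_profile m (\<theta>, u))"
    and "rate_to_dest lam del (relay_profile m (\<theta>, u)) \<le> pi/2 * (lam - del) * \<theta> + del"
    unfolding q_eq by (simp_all add: mult_left_mono)
qed

lemma nn_integral_missed_relay_prob_ge:
  assumes m: "2 \<le> m" and del: "0 < del" "del \<le> lam" and \<alpha>: "0 \<le> \<alpha>"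
  shows "ennreal (exp (- (\<alpha> * (pi/2 * lam)))) \<le> (\<integral>\<^sup>+v. missed_relay_prob lam del \<alpha> v \<partial>relay_dist m)"
proof -
  have "ennreal (exp (- (\<alpha> * (pi/2 * lam)))) * ennreal ((pi/2) / (pi/2))
      \<le> (\<integral>\<^sup>+v. missed_relay_prob lam del \<alpha> v \<partial>relay_dist m)"
  proof (rule nn_integral_relay_dist_lower_bound[OF m])
    fix \<theta> u assume "\<theta> \<in> {0..pi/2}"
    note bounds = rate_to_source_relay_profile_bounds[OF m del this, of u]
    have "exp (- (\<alpha> * (pi/2 * lam))) \<le> exp (- (\<alpha> * rate_to_source lam del (relay_profile m (\<theta>, u))))"
      using mult_left_mono[OF bounds(2) \<alpha>] by simp
    then show "ennreal (exp (- (\<alpha> * (pi/2 * lam)))) \<le> missed_relay_prob lam del \<alpha> (relay_profile m (\<theta>, u))"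
      using bounds(1) del by (simp add: missed_relay_prob_def ennreal_leI)
  qed (use pi_gt_zero in auto)
  then show ?thesis by simp
qed

lemma nn_integral_missed_relay_prob_power_ge:
  assumes m: "2 \<le> m" and lam: "0 < lam" and del: "0 < del" "del \<le> lam" and n: "1 \<le> n"
  shows "ennreal (exp (- 1))
    \<le> (\<integral>\<^sup>+v. missed_relay_prob lam del (1 / (real n * (pi/2 * lam))) v \<partial>relay_dist m) ^ (n - 1)"
proof -
  define \<alpha> where "\<alpha> = 1 / (real n * (pi/2 * lam))"
  have \<alpha>: "0 \<le> \<alpha>" "\<alpha> * (pi/2 * lam) = 1 / real n"
    using lam n by (auto simp: \<alpha>_def)
  have "real (n - 1) * (\<alpha> * (pi/2 * lam)) = (real n - 1) / real n"
    unfolding \<alpha>(2) using n by (simp add: of_nat_diff)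
  also have "\<dots> \<le> 1" using n by simp
  finally have "ennreal (exp (- 1)) \<le> ennreal (exp (- (\<alpha> * (pi/2 * lam)))) ^ (n - 1)"
    by (simp add: ennreal_power exp_of_nat_mult[symmetric])
  also have "\<dots> \<le> (\<integral>\<^sup>+v. missed_relay_prob lam del \<alpha> v \<partial>relay_dist m) ^ (n - 1)"
    by (intro power_mono nn_integral_missed_relay_prob_ge[OF m del \<alpha>(1)]) simp
  finally show ?thesis by (simp add: \<alpha>_def)
qed

lemma chosen_relay_prob_relay_profile_ge:
  assumes m: "2 \<le> m" and del: "0 < del" "del \<le> lam / 2"
    and \<alpha>: "0 \<le> \<alpha>" "\<alpha> * (pi/2 * lam) \<le> 1" and s: "0 \<le> s" "s * del \<le> 1"
    and \<theta>: "\<theta> \<in> {0..1 / (1 + s)}" and u: "0 \<le> u 0" "u 0 \<le> 1"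
  shows "ennreal (\<alpha> * (pi/2 * lam) / 8 * exp (- (pi/2 * lam + 2)))
    \<le> chosen_relay_prob lam del \<alpha> s (relay_profile m (\<theta>, u))"
proof -
  define \<Lambda> where "\<Lambda> = pi/2 * lam"
  define k where "k = pi/2 * (lam - del)"
  define r where "r = rate_to_source lam del (relay_profile m (\<theta>, u))"
  define q where "q = rate_to_dest lam del (relay_profile m (\<theta>, u))"
  have "0 \<le> \<theta>" "(1 + s) * \<theta> \<le> 1" "0 \<le> s * \<theta>"
    using \<theta> s by (auto simp: field_simps)
  then have \<theta>_bounds: "0 \<le> \<theta>" "\<theta> \<le> 1" "s * \<theta> \<le> 1"
    by (simp_all add: algebra_simps)
  moreover have "1 \<le> pi/2" using pi_gt3 by simp
  ultimately have \<theta>_pi: "\<theta> \<in> {0..pi/2}" by simp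
  have del_lam: "del \<le> lam" using del by simp
  have "1 * del \<le> pi/2 * del" using del pi_gt3 by (intro mult_right_mono) auto
  then have k: "0 \<le> k" "k + del \<le> \<Lambda>"
    using del unfolding k_def \<Lambda>_def right_diff_distrib by auto
  have r: "\<Lambda> / 4 \<le> r" "r \<le> \<Lambda>"
    using rate_to_source_relay_profile_ge[OF m del \<theta>_bounds(1,2)]
      rate_to_source_relay_profile_bounds[OF m del(1) del_lam \<theta>_pi]
    by (simp_all add: r_def \<Lambda>_def)
  have q: "0 < q" "q \<le> k * \<theta> + del"
    using rate_to_dest_relay_profile_bounds[where u = u, OF m del(1) del_lam \<theta>_pi u] del
    by (simp_all add: q_def k_def)
  have "\<alpha> * \<Lambda> / 8 \<le> \<alpha> * r / 2"
    using mult_left_mono[OF r(1) \<alpha>(1)] by (simp add: mult.commute)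
  also have "\<dots> \<le> 1 - exp (- (\<alpha> * r))"
    using r \<alpha> mult_left_mono[OF r(2) \<alpha>(1)] mult_nonneg_nonneg[OF \<alpha>(1), of r]
    by (intro one_minus_exp_neg_ge_half) (auto simp: \<Lambda>_def)
  finally have source: "\<alpha> * \<Lambda> / 8 \<le> 1 - exp (- (\<alpha> * r))" .
  have "k * \<theta> \<le> k" using mult_left_le[OF \<theta>_bounds(2) k(1)] .
  then have "\<alpha> * q \<le> \<alpha> * \<Lambda>"
    using q k \<alpha> by (intro mult_left_mono) auto
  moreover have "s * q \<le> k * (s * \<theta>) + s * del"
    using mult_left_mono[OF q(2) s(1)] by (simp add: algebra_simps)
  moreover have "k * (s * \<theta>) \<le> k"
    using mult_left_le[OF \<theta>_bounds(3) k(1)] .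
  moreover have "\<alpha> * \<Lambda> \<le> 1" using \<alpha> by (simp add: \<Lambda>_def)
  ultimately have "(\<alpha> + s) * q \<le> \<Lambda> + 2"
    using s k del unfolding distrib_right by linarith
  then have dest: "exp (- (\<Lambda> + 2)) \<le> exp (- ((\<alpha> + s) * q))" by simp
  have "\<alpha> * \<Lambda> / 8 * exp (- (\<Lambda> + 2)) \<le> (1 - exp (- (\<alpha> * r))) * exp (- ((\<alpha> + s) * q))"
    using source dest \<alpha> r k del by (intro mult_mono mult_nonneg_nonneg) auto
  then show ?thesis
    using r q k del by (simp add: chosen_relay_prob_def r_def[symmetric] q_def[symmetric] \<Lambda>_def ennreal_leI)
qed

lemma nn_integral_chosen_relay_prob_ge:
  assumes m: "2 \<le> m" and lam: "0 < lam" and del: "0 < del" "del \<le> lam / 2"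
    and \<alpha>: "0 \<le> \<alpha>" "\<alpha> * (pi/2 * lam) \<le> 1" and s: "0 \<le> s" "s * del \<le> 1"
  shows "ennreal (\<alpha> * (pi/2 * lam) / 8 * exp (- (pi/2 * lam + 2))) * ennreal (1 / (1 + s) / (pi/2))
    \<le> (\<integral>\<^sup>+v. chosen_relay_prob lam del \<alpha> s v \<partial>relay_dist m)"
proof (rule nn_integral_relay_dist_lower_bound[OF m])
  have "1 / (1 + s) \<le> 1" using s by simp
  then show "1 / (1 + s) \<le> pi / 2" using pi_gt3 by linarith
  fix \<theta> and u :: "nat \<Rightarrow> real"
  assume "\<theta> \<in> {0..1 / (1 + s)}" "\<forall>i<m - 1. 0 \<le> u i \<and> u i \<le> 1"
  then show "ennreal (\<alpha> * (pi/2 * lam) / 8 * exp (- (pi/2 * lam + 2)))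
      \<le> chosen_relay_prob lam del \<alpha> s (relay_profile m (\<theta>, u))"
    using m by (intro chosen_relay_prob_relay_profile_ge[OF m del \<alpha> s]) auto
qed (use s in auto)

lemma nn_integral_delay_event_ge:
  assumes m: "2 \<le> m" and lam: "0 < lam" and del: "0 < del" "del \<le> lam / 2"
    and i: "i < n" and s: "0 \<le> s" "s * del \<le> 1"
  shows "ennreal (exp (- (pi/2 * lam + 5)) / (4 * pi) / (real n * (1 + s)))
    \<le> (\<integral>\<^sup>+x. of_bool (delay_event m lam del n (1 / (real n * (pi/2 * lam))) s i x) \<partial>fm_space m n)"
proof -
  define \<Lambda> where "\<Lambda> = pi/2 * lam"
  define \<alpha> where "\<alpha> = 1 / (real n * \<Lambda>)"
  have \<Lambda>: "0 < \<Lambda>" using lam by (simp add: \<Lambda>_def)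
  have n: "0 < real n" using i by simp
  have \<alpha>: "0 \<le> \<alpha>" "\<alpha> * \<Lambda> = 1 / real n" "\<alpha> * \<Lambda> \<le> 1"
    using \<Lambda> n by (auto simp: \<alpha>_def)
  have missed: "ennreal (exp (- 1)) \<le> (\<integral>\<^sup>+v. missed_relay_prob lam del \<alpha> v \<partial>relay_dist m) ^ (n - 1)"
    unfolding \<alpha>_def \<Lambda>_def using del lam i by (intro nn_integral_missed_relay_prob_power_ge[OF m lam del(1)]) auto
  have "1 * lam \<le> pi/2 * lam" using lam pi_gt3 by (intro mult_right_mono) auto
  then have "del \<le> \<Lambda>" using del unfolding \<Lambda>_def by linarith
  then have "\<alpha> * del \<le> \<alpha> * \<Lambda>" using \<alpha> by (intro mult_left_mono) auto
  then have source_dest: "exp (- 2) \<le> exp (- ((\<alpha> + s) * del))"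
    using \<alpha> s by (simp add: distrib_right)
  define A where "A = \<alpha> * \<Lambda> / 8 * exp (- (\<Lambda> + 2))"
  define B where "B = 1 / (1 + s) / (pi/2)"
  have AB: "0 \<le> A" "0 \<le> B"
    using \<alpha> \<Lambda> s by (simp_all add: A_def B_def)
  have chosen: "ennreal A * ennreal B \<le> (\<integral>\<^sup>+v. chosen_relay_prob lam del \<alpha> s v \<partial>relay_dist m)"
    unfolding A_def B_def \<Lambda>_def
    by (rule nn_integral_chosen_relay_prob_ge[OF m lam del \<alpha>(1) _ s]) (use \<alpha>(3) in \<open>simp add: \<Lambda>_def\<close>)
  have "exp (- (\<Lambda> + 5)) / (4 * pi) * (y * x)
      = y / 8 * exp (- (\<Lambda> + 2)) * (x / (pi/2)) * exp (- 1) * exp (- 2)" for x y :: real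
    by (simp add: field_simps exp_add[symmetric])
  from this[of "1 / real n" "1 / (1 + s)"]
  have "exp (- (\<Lambda> + 5)) / (4 * pi) / (real n * (1 + s)) = A * B * exp (- 1) * exp (- 2)"
    by (simp add: A_def B_def \<alpha>(2))
  then have "ennreal (exp (- (\<Lambda> + 5)) / (4 * pi) / (real n * (1 + s)))
      = ennreal A * ennreal B * ennreal (exp (- 1)) * ennreal (exp (- 2))"
    using AB by (simp add: ennreal_mult)
  also have "\<dots> \<le> (\<integral>\<^sup>+v. chosen_relay_prob lam del \<alpha> s v \<partial>relay_dist m)
      * (\<integral>\<^sup>+v. missed_relay_prob lam del \<alpha> v \<partial>relay_dist m) ^ (n - 1)
      * ennreal (exp (- ((\<alpha> + s) * del)))"
    using chosen missed source_dest by (intro mult_mono ennreal_leI) auto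
  also have "\<dots> = (\<integral>\<^sup>+x. of_bool (delay_event m lam del n \<alpha> s i x) \<partial>fm_space m n)"
    by (rule nn_integral_delay_event[OF m i \<alpha>(1) s(1) del(1), symmetric])
  finally show ?thesis by (simp add: \<alpha>_def \<Lambda>_def)
qed

section \<open>Expected delay\<close>

lemma sum_nn_integral_delay_event_ge:
  assumes m: "2 \<le> m" and lam: "0 < lam" and del: "0 < del" "del \<le> lam / 2"
    and n: "1 \<le> n" and s: "0 \<le> s" "s * del \<le> 1"
  shows "ennreal (exp (- (pi/2 * lam + 5)) / (4 * pi) / (1 + s))
    \<le> (\<Sum>i<n. \<integral>\<^sup>+x. of_bool (delay_event m lam del n (1 / (real n * (pi/2 * lam))) s i x) \<partial>fm_space m n)"
proof -
  define c where "c = exp (- (pi/2 * lam + 5)) / (4 * pi)"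
  have "ennreal (c / (1 + s)) = ennreal (\<Sum>i<n. c / (real n * (1 + s)))"
    using n by simp
  also have "\<dots> = (\<Sum>i<n. ennreal (c / (real n * (1 + s))))"
    using s by (intro sum_ennreal[symmetric]) (simp add: c_def)
  also have "\<dots> \<le> (\<Sum>i<n. \<integral>\<^sup>+x. of_bool (delay_event m lam del n (1 / (real n * (pi/2 * lam))) s i x) \<partial>fm_space m n)"
    unfolding c_def by (intro sum_mono nn_integral_delay_event_ge[OF m lam del _ s]) simp
  finally show ?thesis by (simp add: c_def)
qed

lemma sum_nn_integral_delay_events_le_fm_T2:
  assumes m: "2 \<le> m" and del: "0 < del"
  shows "(\<Sum>l=1..L. \<Sum>i<n. \<integral>\<^sup>+x. of_bool (delay_event m lam del n \<alpha> (real l) i x) \<partial>fm_space m n)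
    \<le> (\<integral>\<^sup>+x. ennreal (fm_T2 m lam del n x) \<partial>fm_space m n)"
proof -
  have "(\<lambda>x. of_bool (delay_event m lam del n \<alpha> (real l) i x) :: ennreal) \<in> borel_measurable (fm_space m n)"
    if "i \<in> {..<n}" for l i
    using measurable_delay_event[OF m del, of i] that by simp
  then have "(\<Sum>l=1..L. \<Sum>i<n. \<integral>\<^sup>+x. of_bool (delay_event m lam del n \<alpha> (real l) i x) \<partial>fm_space m n)
      = (\<integral>\<^sup>+x. (\<Sum>l=1..L. \<Sum>i<n. of_bool (delay_event m lam del n \<alpha> (real l) i x)) \<partial>fm_space m n)"
    by (simp only: nn_integral_sum borel_measurable_sum)
  also have "\<dots> \<le> (\<integral>\<^sup>+x. ennreal (fm_T2 m lam del n x) \<partial>fm_space m n)"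
    using AE_fm_space_clocks_nonneg[OF m]
  proof (rule nn_integral_mono_AE[OF eventually_mono])
    fix x :: "(nat \<Rightarrow> nat \<Rightarrow> real) \<times> (nat \<times> nat \<times> nat \<Rightarrow> real)"
    assume "\<forall>c. 0 \<le> snd x c"
    from sum_delay_events_le_fm_T2[OF m del this, where \<rho> = "fst x"]
    show "(\<Sum>l=1..L. \<Sum>i<n. of_bool (delay_event m lam del n \<alpha> (real l) i x)) \<le> ennreal (fm_T2 m lam del n x)"
      by simp
  qed
  finally show ?thesis .
qed

lemma nn_integral_fm_T2_ge_ln:
  assumes m: "2 \<le> m" and lam: "0 < lam" and del: "0 < del" "del \<le> lam / 2" and n: "1 \<le> n"
  shows "ennreal (exp (- (pi/2 * lam + 5)) / (8 * pi) * ln (1 / del))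
    \<le> (\<integral>\<^sup>+x. ennreal (fm_T2 m lam del n x) \<partial>fm_space m n)"
proof -
  define c where "c = exp (- (pi/2 * lam + 5)) / (4 * pi)"
  define L where "L = nat \<lfloor>1 / del\<rfloor>"
  have c: "0 \<le> c" by (simp add: c_def)
  have "real L = \<lfloor>1 / del\<rfloor>" using del by (simp add: L_def)
  then have "1 / del \<le> real L + 1" "real L \<le> 1 / del"
    using of_int_floor_le[of "1 / del"] real_of_int_floor_add_one_ge[of "1 / del"] by linarith+
  then have L: "1 / del \<le> real L + 1" "real L * del \<le> 1"
    using del by (simp_all add: le_divide_eq)
  have "c / 2 * ln (1 / del) \<le> c / 2 * ln (real L + 1)"
    using c del L by (intro mult_left_mono) auto
  also have "\<dots> \<le> c * (\<Sum>l=1..L. 1 / (1 + real l))"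
    using mult_left_mono[OF ln_le_sum_inverse_Suc c, of L] by simp
  finally have "ennreal (c / 2 * ln (1 / del)) \<le> (\<Sum>l=1..L. ennreal (c / (1 + real l)))"
    using c by (simp add: ennreal_leI sum_distrib_left)
  also have "\<dots> \<le> (\<Sum>l=1..L. \<Sum>i<n.
      \<integral>\<^sup>+x. of_bool (delay_event m lam del n (1 / (real n * (pi/2 * lam))) (real l) i x) \<partial>fm_space m n)"
  proof (intro sum_mono)
    fix l assume "l \<in> {1..L}"
    then have "real l * del \<le> real L * del" using del by (intro mult_right_mono) auto
    with L have "real l * del \<le> 1" by linarith
    then show "ennreal (c / (1 + real l)) \<le> (\<Sum>i<n.
        \<integral>\<^sup>+x. of_bool (delay_event m lam del n (1 / (real n * (pi/2 * lam))) (real l) i x) \<partial>fm_space m n)"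
      unfolding c_def by (intro sum_nn_integral_delay_event_ge[OF m lam del n]) auto
  qed
  also have "\<dots> \<le> (\<integral>\<^sup>+x. ennreal (fm_T2 m lam del n x) \<partial>fm_space m n)"
    by (rule sum_nn_integral_delay_events_le_fm_T2[OF m del(1)])
  finally show ?thesis by (simp add: c_def)
qed

theorem lemma2:
  fixes m :: nat and lam :: real and del :: "nat \<Rightarrow> real"
  assumes "m \<ge> 2" and "lam > 0" and "\<forall>n. del n > 0" and "del \<longlonglongrightarrow> 0"
  shows "\<exists>c c'. c > 0 \<and> c' > 0 \<and>
    (\<forall>\<^sub>F n in sequentially.
       (\<integral>\<^sup>+ \<omega>. ennreal (fm_T2 m lam (del n) n \<omega>) \<partial>(fm_space m n))
         \<ge> ennreal (min (c * ln (1 / del n)) (c' * real n / ln (real n))))"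
proof -
  define c where "c = exp (- (pi/2 * lam + 5)) / (8 * pi)"
  have "\<forall>\<^sub>F n in sequentially. del n < lam / 2"
    using assms(2,4) by (intro order_tendstoD(2)) auto
  moreover have "\<forall>\<^sub>F n in sequentially. 1 \<le> n"
    by (rule eventually_ge_at_top)
  ultimately have "\<forall>\<^sub>F n in sequentially.
      ennreal (min (c * ln (1 / del n)) (1 * real n / ln (real n)))
        \<le> (\<integral>\<^sup>+ \<omega>. ennreal (fm_T2 m lam (del n) n \<omega>) \<partial>(fm_space m n))"
  proof eventually_elim
    case (elim n)
    have "ennreal (min (c * ln (1 / del n)) (1 * real n / ln (real n))) \<le> ennreal (c * ln (1 / del n))"
      by (intro ennreal_leI) simp
    also have "\<dots> \<le> (\<integral>\<^sup>+ \<omega>. ennreal (fm_T2 m lam (del n) n \<omega>) \<partial>(fm_space m n))"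
      using nn_integral_fm_T2_ge_ln[OF assms(1,2) _ _ elim(2), of "del n"] assms(3) elim(1)
      by (simp add: c_def mult.commute)
    finally show ?case .
  qed
  moreover have "0 < c" by (simp add: c_def)
  ultimately show ?thesis
    by (intro exI[of _ c] exI[of _ 1]) simp
qed

end
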